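(* Let $k\ge 2$ be an integer. For $n\ge 1$ let \[E_{n,k}=\frac{1}{k^n}\sum_{i=1}^n i\cdot \mathrm{IB}_k(n,i),\] the expected width of the largest BP-factorization of a uniformly random length-$n$ word over $\Sigma_k$, where $\mathrm{IB}_k(n,i)$ is the number of length-$n$ words over $\Sigma_k$ whose largest BP-factorization has width $i$. Then the limit $E_k=\lim_{n\to\infty}E_{n,k}$ exists.
   Context: $\Sigma_k=\{0,1,\ldots,k-1\}$. A block palindrome factorization (BP-factorization) of a word $w$ is a factorization $w=w_m\cdots w_1w_0w_1\cdots w_m$ with $m\ge 0$, $w_0$ a possibly empty word and $w_1,\dots,w_m$ non-empty words. Its width is $2m+1$ if $w_0$ is non-empty and $2m$ if $w_0$ is empty. A largest BP-factorization of $w$ is a BP-factorization of $w$ of maximum width. *)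

theory Defs
  imports "HOL-Analysis.Analysis"
begin

definition words :: "nat \<Rightarrow> nat \<Rightarrow> nat list set" where
  "words k n = {w. length w = n \<and> set w \<subseteq> {0..<k}}"

text \<open>A BP-factorization w = w_m ... w_1 w_0 w_1 ... w_m is encoded by the list
  ws = [w_1, ..., w_m] of non-empty blocks and the (possibly empty) centre w_0.\<close>

definition is_BP_fact :: "nat list \<Rightarrow> nat list list \<Rightarrow> nat list \<Rightarrow> bool" where
  "is_BP_fact w ws w0 \<longleftrightarrow>
     (\<forall>u\<in>set ws. u \<noteq> []) \<and> w = concat (rev ws) @ w0 @ concat ws"

definition BP_width :: "nat list list \<Rightarrow> nat list \<Rightarrow> nat" where
  "BP_width ws w0 = 2 * length ws + (if w0 \<noteq> [] then 1 else 0)"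

definition largest_BP_width :: "nat list \<Rightarrow> nat" where
  "largest_BP_width w = Max {BP_width ws w0 | ws w0. is_BP_fact w ws w0}"

definition IB :: "nat \<Rightarrow> nat \<Rightarrow> nat \<Rightarrow> nat" where
  "IB k n i = card {w \<in> words k n. largest_BP_width w = i}"

definition E :: "nat \<Rightarrow> nat \<Rightarrow> real" where
  "E n k = (1 / real k ^ n) * (\<Sum>i=1..n. real i * real (IB k n i))"

end

(*
  Let u be the shortest non-empty border of a word w. It is unbordered, and an unbordered word
  cannot overlap itself; hence the outer block of any BP-factorization of w = u v u can be traded
  for u, so that w has largest width 2 plus that of v, while a word without non-empty border has
  largest width 1. Summing over all words of length n gives the renewal equation

    E_n = 1 + sum_{1 <= l <= n/2} q_l (1 + E_{n-2l}),   q_l = U_l / k^(2l),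

  where U_l is the number of unbordered words of length l.

  As q_l <= k^-l and the word 00 is bordered, the partial sums of q_l stay below 1 - k^-4 < 1, and
  a contraction argument shows that E_n converges (to (1 + Q) / (1 - Q), where Q = sum_l q_l).
*)

theory Submission
  imports Defs "HOL-Library.Sublist"
begin

lemma is_BP_fact_Nil [simp]: "is_BP_fact w [] w0 \<longleftrightarrow> w0 = w"
  unfolding is_BP_fact_def by auto

lemma is_BP_fact_snoc:
  "is_BP_fact w (ws @ [b]) w0 \<longleftrightarrow> b \<noteq> [] \<and> (\<exists>w'. w = b @ w' @ b \<and> is_BP_fact w' ws w0)"
  unfolding is_BP_fact_def by auto

lemma BP_width_snoc [simp]: "BP_width (ws @ [b]) w0 = BP_width ws w0 + 2"
  unfolding BP_width_def by simp

lemma BP_width_le_length: "is_BP_fact w ws w0 \<Longrightarrow> BP_width ws w0 \<le> length w"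
proof (induction ws arbitrary: w rule: rev_induct)
  case Nil
  then show ?case by (cases w) (auto simp: BP_width_def)
next
  case (snoc b ws)
  then obtain w' where "b \<noteq> []" "w = b @ w' @ b" "is_BP_fact w' ws w0"
    by (auto simp: is_BP_fact_snoc)
  with snoc.IH[of w'] show ?case by (cases b) auto
qed

lemma finite_BP_widths: "finite {BP_width ws w0 | ws w0. is_BP_fact w ws w0}"
  by (rule finite_subset[of _ "{..length w}"]) (auto dest: BP_width_le_length)

lemma largest_BP_width_attained:
  obtains ws w0 where "is_BP_fact w ws w0" "BP_width ws w0 = largest_BP_width w"
proof -
  have "largest_BP_width w \<in> {BP_width ws w0 | ws w0. is_BP_fact w ws w0}"
    unfolding largest_BP_width_def
    by (rule Max_in[OF finite_BP_widths]) (use is_BP_fact_Nil[of w w] in blast)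
  then obtain ws w0 where "is_BP_fact w ws w0" "largest_BP_width w = BP_width ws w0"
    by blast
  then show ?thesis using that by simp
qed

lemma largest_BP_width_le_iff:
  "largest_BP_width w \<le> m \<longleftrightarrow> (\<forall>ws w0. is_BP_fact w ws w0 \<longrightarrow> BP_width ws w0 \<le> m)"
  unfolding largest_BP_width_def
  by (subst Max_le_iff[OF finite_BP_widths]) (use is_BP_fact_Nil[of w w] in blast)+

lemma BP_width_le_largest: "is_BP_fact w ws w0 \<Longrightarrow> BP_width ws w0 \<le> largest_BP_width w"
  using largest_BP_width_le_iff by blast

lemma largest_BP_width_le_length: "largest_BP_width w \<le> length w"
  by (simp add: largest_BP_width_le_iff BP_width_le_length)

lemma largest_BP_width_ge_1: "w \<noteq> [] \<Longrightarrow> 1 \<le> largest_BP_width w"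
  using BP_width_le_largest[of w "[]" w] by (simp add: BP_width_def)

lemma largest_BP_width_wrap: "b \<noteq> [] \<Longrightarrow> largest_BP_width m + 2 \<le> largest_BP_width (b @ m @ b)"
proof -
  assume "b \<noteq> []"
  obtain ws w0 where "is_BP_fact m ws w0" "BP_width ws w0 = largest_BP_width m"
    by (rule largest_BP_width_attained)
  with \<open>b \<noteq> []\<close> have "is_BP_fact (b @ m @ b) (ws @ [b]) w0"
      and "BP_width (ws @ [b]) w0 = largest_BP_width m + 2"
    by (auto simp: is_BP_fact_snoc)
  then show ?thesis by (metis BP_width_le_largest)
qed

lemma largest_BP_width_wrap_mono: "largest_BP_width m \<le> largest_BP_width (y @ m @ y)"
  using largest_BP_width_wrap[of y m] by (cases "y = []") auto


section \<open>Unbordered words\<close>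

definition unbordered :: "'a list \<Rightarrow> bool" where
  "unbordered u \<longleftrightarrow> u \<noteq> [] \<and> (\<forall>x. prefix x u \<longrightarrow> suffix x u \<longrightarrow> x = [] \<or> x = u)"

lemma ex_unbordered_border:
  "b \<noteq> [] \<Longrightarrow> \<exists>u v. unbordered u \<and> b @ m @ b = u @ v @ u"
proof (induction "length b" arbitrary: b m rule: less_induct)
  case less
  show ?case
  proof (cases "unbordered b")
    case True
    then show ?thesis by blast
  next
    case False
    then obtain x where x: "prefix x b" "suffix x b" "x \<noteq> []" "x \<noteq> b"
      using less.prems unfolding unbordered_def by blast
    then obtain r r' where "b = x @ r" "b = r' @ x"
      unfolding prefix_def suffix_def by blast
    then have "b @ m @ b = x @ (r @ m @ r') @ x" by simp
    moreover have "length x < length b"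
      using prefix_length_less[of x b] x by (simp add: prefix_order.less_le)
    ultimately show ?thesis using less.hyps[of x "r @ m @ r'"] x(3) by auto
  qed
qed

lemma unbordered_prefix_suffix:
  assumes "unbordered u" "prefix u b" "suffix u b" "length u < length b"
  shows "\<exists>y. b = u @ y @ u"
proof -
  obtain s t where st: "b = u @ s" "b = t @ u"
    using assms(2,3) unfolding prefix_def suffix_def by blast
  have "t \<noteq> []" using st assms(4) by auto
  from st have "u @ s = t @ u" by simp
  then obtain z where "u = t @ z \<and> z @ s = u \<or> u @ z = t \<and> s = z @ u"
    by (auto simp: append_eq_append_conv2)
  then show ?thesis
  proof
    assume z: "u = t @ z \<and> z @ s = u"
    then have "prefix z u" "suffix z u" by (metis prefixI, metis suffixI)
    moreover have "z \<noteq> u" using z \<open>t \<noteq> []\<close> by auto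
    ultimately have "z = []" using assms(1) unfolding unbordered_def by blast
    then show ?thesis using z st by auto
  qed (use st in auto)
qed

lemma prefix_suffix_wrap: "prefix u (u @ v @ u)" "suffix u (u @ v @ u)"
  by (metis prefixI, metis append.assoc suffixI)

lemma unbordered_split_unique:
  assumes "unbordered u1" "unbordered u2" "u1 @ v1 @ u1 = u2 @ v2 @ u2"
  shows "u1 = u2 \<and> v1 = v2"
proof -
  have "u1 = u2" if "unbordered u1" "unbordered u2" "u1 @ v1 @ u1 = u2 @ v2 @ u2"
      "length u1 \<le> length u2" for u1 u2 v1 v2 :: "'a list"
  proof -
    let ?w = "u1 @ v1 @ u1"
    have "prefix u1 ?w" "suffix u1 ?w" "prefix u2 ?w" "suffix u2 ?w"
      using prefix_suffix_wrap that(3) by metis+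
    then have "prefix u1 u2" "suffix u1 u2"
      using that(4) prefix_length_prefix suffix_length_suffix by blast+
    then show ?thesis using that(1,2) unfolding unbordered_def by blast
  qed
  then have "u1 = u2" using assms by (metis nat_le_linear)
  then show ?thesis using assms(3) by simp
qed


section \<open>Largest width via the shortest border\<close>

lemma largest_BP_width_unbordered:
  assumes "unbordered u"
  shows "largest_BP_width (u @ v @ u) = largest_BP_width v + 2"
proof -
  let ?w = "u @ v @ u"
  have "u \<noteq> []" using assms unfolding unbordered_def by blast
  have "BP_width ws w0 \<le> largest_BP_width v + 2" if fact: "is_BP_fact ?w ws w0" for ws w0
  proof (cases ws rule: rev_cases)
    case Nil
    then show ?thesis by (simp add: BP_width_def)
  next
    case (snoc ws' b)
    with fact obtain w' where b: "b \<noteq> []" "?w = b @ w' @ b" and w': "is_BP_fact w' ws' w0"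
      by (auto simp: is_BP_fact_snoc)
    have "prefix u ?w" "suffix u ?w" "prefix b ?w" "suffix b ?w"
      using prefix_suffix_wrap b(2) by metis+
    have "BP_width ws' w0 \<le> largest_BP_width v"
    proof (cases "length b \<le> length u")
      case True
      then have "prefix b u" "suffix b u"
        using prefix_length_prefix[OF \<open>prefix b ?w\<close> \<open>prefix u ?w\<close>]
          suffix_length_suffix[OF \<open>suffix b ?w\<close> \<open>suffix u ?w\<close>] by auto
      then have "b = u" using assms b(1) unfolding unbordered_def by blast
      then show ?thesis using b(2) w' BP_width_le_largest by auto
    next
      case False
      then have "prefix u b" "suffix u b"
        using prefix_length_prefix[OF \<open>prefix u ?w\<close> \<open>prefix b ?w\<close>]
          suffix_length_suffix[OF \<open>suffix u ?w\<close> \<open>suffix b ?w\<close>] by auto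
      then obtain y where "b = u @ y @ u"
        using unbordered_prefix_suffix[OF assms] False by fastforce
      then have v: "v = y @ (u @ w' @ u) @ y" using b(2) by simp
      have "BP_width ws' w0 \<le> largest_BP_width w'" using w' by (rule BP_width_le_largest)
      also have "\<dots> \<le> largest_BP_width (u @ w' @ u)"
        by (rule largest_BP_width_wrap_mono)
      also have "\<dots> \<le> largest_BP_width v"
        unfolding v by (rule largest_BP_width_wrap_mono)
      finally show ?thesis .
    qed
    then show ?thesis using snoc by simp
  qed
  then have "largest_BP_width ?w \<le> largest_BP_width v + 2"
    by (simp add: largest_BP_width_le_iff)
  with largest_BP_width_wrap[OF \<open>u \<noteq> []\<close>] show ?thesis by (rule antisym[rotated])
qed

lemma largest_BP_width_no_border:
  assumes "w \<noteq> []" "\<nexists>u v. unbordered u \<and> w = u @ v @ u"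
  shows "largest_BP_width w = 1"
proof -
  have "BP_width ws w0 \<le> 1" if "is_BP_fact w ws w0" for ws w0
  proof (cases ws rule: rev_cases)
    case Nil
    then show ?thesis by (simp add: BP_width_def)
  next
    case (snoc ws' b)
    with that obtain w' where "b \<noteq> []" "w = b @ w' @ b"
      by (auto simp: is_BP_fact_snoc)
    then show ?thesis using assms(2) ex_unbordered_border by metis
  qed
  then show ?thesis
    using largest_BP_width_ge_1[OF assms(1)] by (simp add: largest_BP_width_le_iff antisym)
qed

text \<open>By unbordered_split_unique the sum has at most one term; in this form the dichotomy
  (w = u v u with u unbordered, or w has no non-empty border) can be summed over all words.\<close>

lemma largest_BP_width_eq_sum_splits:
  assumes "w \<noteq> []"
  shows "largest_BP_width w = 1 + (\<Sum>(u, v) \<in> {(u, v). unbordered u \<and> w = u @ v @ u}. largest_BP_width v + 1)"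
proof (cases "\<exists>u v. unbordered u \<and> w = u @ v @ u")
  case True
  then obtain u v where uv: "unbordered u" "w = u @ v @ u" by blast
  then have "{(u, v). unbordered u \<and> w = u @ v @ u} = {(u, v)}"
    using unbordered_split_unique by blast
  then show ?thesis using uv largest_BP_width_unbordered by simp
next
  case False
  then have no_split: "{(u, v). unbordered u \<and> w = u @ v @ u} = {}" by blast
  show ?thesis unfolding no_split largest_BP_width_no_border[OF assms False] by simp
qed

section \<open>Counting words\<close>

lemma finite_words: "finite (words k n)"
  using finite_lists_length_eq[of "{0..<k}" n] unfolding words_def by (simp add: conj_commute)

lemma card_words: "card (words k n) = k ^ n"
  using card_lists_length_eq[of "{0..<k}" n] unfolding words_def by (simp add: conj_commute)

definition unbordered_words :: "nat \<Rightarrow> nat \<Rightarrow> nat list set" where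
  "unbordered_words k l = {u \<in> words k l. unbordered u}"

definition width_sum :: "nat \<Rightarrow> nat \<Rightarrow> nat" where
  "width_sum k n = (\<Sum>w\<in>words k n. largest_BP_width w)"

lemma E_eq_width_sum: "E n k = width_sum k n / real k ^ n"
proof -
  have "width_sum k n = (\<Sum>i\<in>{0..n}. \<Sum>w\<in>{w \<in> words k n. largest_BP_width w = i}. largest_BP_width w)"
    unfolding width_sum_def
  proof (rule sum.group[symmetric])
    show "largest_BP_width ` words k n \<subseteq> {0..n}"
      using largest_BP_width_le_length by (auto simp: words_def)
  qed (simp_all add: finite_words)
  also have "\<dots> = (\<Sum>i\<in>{0..n}. i * IB k n i)"
    unfolding IB_def by (rule sum.cong) auto
  also have "\<dots> = (\<Sum>i=1..n. i * IB k n i)"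
    by (simp add: sum.atLeast_Suc_atMost)
  finally show ?thesis unfolding E_def by simp
qed

definition unbordered_splits :: "nat \<Rightarrow> nat \<Rightarrow> (nat list \<times> nat list) set" where
  "unbordered_splits k n = {(u, v). unbordered u \<and> u @ v @ u \<in> words k n}"

lemma finite_unbordered_splits: "finite (unbordered_splits k n)"
proof (rule finite_subset)
  let ?L = "{xs. set xs \<subseteq> {0..<k} \<and> length xs \<le> n}"
  show "unbordered_splits k n \<subseteq> ?L \<times> ?L"
    unfolding unbordered_splits_def words_def by auto
  show "finite (?L \<times> ?L)" by (intro finite_cartesian_product finite_lists_length_le) simp_all
qed

lemma unbordered_splits_of_length:
  assumes "l \<in> {1..n div 2}"
  shows "{p \<in> unbordered_splits k n. length (fst p) = l} = unbordered_words k l \<times> words k (n - 2*l)"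
  using assms unfolding unbordered_splits_def unbordered_words_def words_def by auto

lemma width_sum_eq_sum_unbordered_splits:
  assumes "n \<ge> 1"
  shows "width_sum k n = k ^ n + (\<Sum>(u, v) \<in> unbordered_splits k n. largest_BP_width v + 1)"
proof -
  let ?P = "unbordered_splits k n"
  define glue :: "nat list \<times> nat list \<Rightarrow> nat list" where "glue = (\<lambda>(u, v). u @ v @ u)"
  define g :: "nat list \<times> nat list \<Rightarrow> nat" where "g = (\<lambda>(u, v). largest_BP_width v + 1)"
  have "width_sum k n = (\<Sum>w\<in>words k n. 1 + (\<Sum>p\<in>{p \<in> ?P. glue p = w}. g p))"
    unfolding width_sum_def
  proof (rule sum.cong)
    fix w assume w: "w \<in> words k n"
    then have "w \<noteq> []" using assms unfolding words_def by auto
    moreover have "{p \<in> ?P. glue p = w} = {(u, v). unbordered u \<and> w = u @ v @ u}"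
      using w unfolding unbordered_splits_def glue_def by auto
    ultimately show "largest_BP_width w = 1 + (\<Sum>p\<in>{p \<in> ?P. glue p = w}. g p)"
      unfolding g_def using largest_BP_width_eq_sum_splits by simp
  qed simp
  also have "\<dots> = (\<Sum>w\<in>words k n. 1) + (\<Sum>w\<in>words k n. \<Sum>p\<in>{p \<in> ?P. glue p = w}. g p)"
    by (rule sum.distrib)
  also have "(\<Sum>w\<in>words k n. \<Sum>p\<in>{p \<in> ?P. glue p = w}. g p) = (\<Sum>p\<in>?P. g p)"
    by (rule sum.group[OF finite_unbordered_splits finite_words])
      (auto simp: unbordered_splits_def glue_def)
  also have "(\<Sum>w\<in>words k n. 1) = k ^ n"
    by (simp add: card_words)
  finally show ?thesis unfolding g_def .
qed

lemma width_sum_rec: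
  assumes "n \<ge> 1"
  shows "width_sum k n = k ^ n +
    (\<Sum>l=1..n div 2. card (unbordered_words k l) * (k ^ (n - 2*l) + width_sum k (n - 2*l)))"
proof -
  let ?P = "unbordered_splits k n"
  define g :: "nat list \<times> nat list \<Rightarrow> nat" where "g = (\<lambda>(u, v). largest_BP_width v + 1)"
  have "(\<Sum>p\<in>?P. g p) = (\<Sum>l=1..n div 2. \<Sum>p\<in>{p \<in> ?P. length (fst p) = l}. g p)"
  proof (rule sum.group[symmetric, OF finite_unbordered_splits finite_atLeastAtMost])
    show "(\<lambda>p. length (fst p)) ` ?P \<subseteq> {1..n div 2}"
      unfolding unbordered_splits_def words_def unbordered_def by (auto simp: Suc_le_eq)
  qed
  also have "\<dots> = (\<Sum>l=1..n div 2. card (unbordered_words k l) * (k ^ (n - 2*l) + width_sum k (n - 2*l)))"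
    by (rule sum.cong) (simp_all add: unbordered_splits_of_length g_def sum.cartesian_product[symmetric]
        sum_Suc card_words width_sum_def)
  finally show ?thesis
    unfolding width_sum_eq_sum_unbordered_splits[OF assms] g_def by simp
qed

section \<open>A renewal equation\<close>

lemma LIMSEQ_div_nat:
  assumes "X \<longlonglongrightarrow> L" "0 < c"
  shows "(\<lambda>n. X (n div c)) \<longlonglongrightarrow> L"
proof -
  have "filterlim (\<lambda>n. n div c) sequentially sequentially"
    unfolding filterlim_at_top eventually_sequentially
  proof
    fix Z show "\<exists>N. \<forall>n\<ge>N. Z \<le> n div c"
      using assms(2) by (intro exI[of _ "Z * c"]) (auto simp: less_eq_div_iff_mult_less_eq)
  qed
  then show ?thesis by (rule filterlim_compose[OF assms(1)])
qed

lemma nonneg_partial_sums_tendsto: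
  fixes q :: "nat \<Rightarrow> real"
  assumes "\<And>l. 0 \<le> q l" "\<And>m. (\<Sum>l=1..m. q l) \<le> \<rho>"
  obtains Q where "(\<lambda>m. \<Sum>l=1..m. q l) \<longlonglongrightarrow> Q" "Q \<le> \<rho>"
proof -
  have "incseq (\<lambda>m. \<Sum>l=1..m. q l)"
    unfolding incseq_def by (auto intro!: sum_mono2 simp: assms(1))
  then obtain Q where Q: "(\<lambda>m. \<Sum>l=1..m. q l) \<longlonglongrightarrow> Q"
    using incseq_convergent assms(2) by metis
  moreover from Q have "Q \<le> \<rho>" by (rule LIMSEQ_le_const2) (use assms(2) in auto)
  ultimately show ?thesis by (rule that)
qed

lemma tendsto_zero_if_contracting:
  fixes d :: "nat \<Rightarrow> real"
  assumes "0 \<le> \<rho>" "\<rho> < 1" and bound: "\<And>n. \<bar>d n\<bar> \<le> D"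
    and contract: "\<And>B \<epsilon>. 0 \<le> B \<Longrightarrow> 0 < \<epsilon> \<Longrightarrow> eventually (\<lambda>n. \<bar>d n\<bar> \<le> B) sequentially \<Longrightarrow>
      eventually (\<lambda>n. \<bar>d n\<bar> \<le> \<rho> * B + \<epsilon>) sequentially"
  shows "d \<longlonglongrightarrow> 0"
proof -
  have "0 \<le> D" using bound[of 0] by linarith
  have iterate: "eventually (\<lambda>n. \<bar>d n\<bar> \<le> \<rho> ^ j * D + \<epsilon> / (1 - \<rho>)) sequentially"
    if "0 < \<epsilon>" for j \<epsilon>
  proof (induction j)
    case 0
    have "0 \<le> \<epsilon> / (1 - \<rho>)" using that assms(2) by simp
    with bound show ?case by (auto intro: always_eventually add_increasing2)
  next
    case (Suc j)
    have "0 \<le> \<rho> ^ j * D + \<epsilon> / (1 - \<rho>)"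
      using that assms(1,2) \<open>0 \<le> D\<close> by simp
    from contract[OF this \<open>0 < \<epsilon>\<close> Suc.IH]
    show ?case using assms(2) by (simp add: field_simps)
  qed
  show ?thesis
    unfolding tendsto_iff dist_real_def
  proof (intro allI impI)
    fix r :: real assume "0 < r"
    have "(\<lambda>j. \<rho> ^ j * D) \<longlonglongrightarrow> 0"
      using assms(1,2) by (intro tendsto_mult_left_zero LIMSEQ_power_zero) simp
    then obtain j where j: "\<rho> ^ j * D < r / 2"
      using order_tendstoD(2)[of _ 0 sequentially "r / 2"] \<open>0 < r\<close> eventually_sequentially
      by (metis half_gt_zero order_refl)
    have pos: "0 < r * (1 - \<rho>) / 4" using \<open>0 < r\<close> assms(2) by simp
    have "1 - \<rho> \<noteq> 0" using assms(2) by simp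
    then have quarter: "r * (1 - \<rho>) / 4 / (1 - \<rho>) = r / 4" by (simp add: field_simps)
    from iterate[OF pos, of j] show "eventually (\<lambda>n. \<bar>d n - 0\<bar> < r) sequentially"
      unfolding quarter by eventually_elim (use j in linarith)
  qed
qed

context
  fixes q d e :: "nat \<Rightarrow> real" and \<rho> :: real
  assumes q_nonneg: "\<And>l. 0 \<le> q l"
    and q_partial_sums_le: "\<And>m. (\<Sum>l=1..m. q l) \<le> \<rho>"
    and \<rho>_less_1: "\<rho> < 1"
    and e_tendsto_0: "e \<longlonglongrightarrow> 0"
    and d_renewal_le: "\<And>n. 1 \<le> n \<Longrightarrow> \<bar>d n\<bar> \<le> \<bar>e n\<bar> + (\<Sum>l=1..n div 2. q l * \<bar>d (n - 2*l)\<bar>)"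
begin

lemma renewal_weighted_sum_le:
  assumes "0 \<le> B" "\<And>l. l \<in> {1..h} \<Longrightarrow> \<bar>d (n - 2*l)\<bar> \<le> B"
  shows "(\<Sum>l=1..h. q l * \<bar>d (n - 2*l)\<bar>) \<le> \<rho> * B"
proof -
  have "(\<Sum>l=1..h. q l * \<bar>d (n - 2*l)\<bar>) \<le> (\<Sum>l=1..h. q l) * B"
    unfolding sum_distrib_right by (rule sum_mono) (simp add: assms(2) mult_left_mono q_nonneg)
  also have "\<dots> \<le> \<rho> * B" by (rule mult_right_mono[OF q_partial_sums_le assms(1)])
  finally show ?thesis .
qed

lemma renewal_bounded:
  obtains D where "\<And>n. \<bar>d n\<bar> \<le> D"
proof -
  obtain K where K: "\<And>n. \<bar>e n\<bar> \<le> K"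
    using convergent_imp_Bseq[of e] e_tendsto_0 unfolding convergent_def Bseq_def by auto
  define D where "D = max \<bar>d 0\<bar> (K / (1 - \<rho>))"
  have "\<bar>d n\<bar> \<le> D" for n
  proof (induction n rule: less_induct)
    case (less n)
    show ?case
    proof (cases "n = 0")
      case True
      then show ?thesis by (simp add: D_def)
    next
      case False
      have "0 \<le> D" unfolding D_def by simp
      with less.IH False have "(\<Sum>l=1..n div 2. q l * \<bar>d (n - 2*l)\<bar>) \<le> \<rho> * D"
        by (intro renewal_weighted_sum_le) auto
      moreover have "K \<le> (1 - \<rho>) * D"
      proof -
        have "K = (1 - \<rho>) * (K / (1 - \<rho>))" using \<rho>_less_1 by simp
        also have "\<dots> \<le> (1 - \<rho>) * D" using \<rho>_less_1 by (intro mult_left_mono) (auto simp: D_def)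
        finally show ?thesis .
      qed
      ultimately show ?thesis using d_renewal_le[of n] K[of n] False by (simp add: algebra_simps)
    qed
  qed
  then show ?thesis by (rule that)
qed

lemma renewal_contracting:
  assumes D: "\<And>n. \<bar>d n\<bar> \<le> D" and "0 \<le> B" "0 < \<epsilon>"
    and "eventually (\<lambda>n. \<bar>d n\<bar> \<le> B) sequentially"
  shows "eventually (\<lambda>n. \<bar>d n\<bar> \<le> \<rho> * B + \<epsilon>) sequentially"
proof -
  define Qs where "Qs m = (\<Sum>l=1..m. q l)" for m
  have "0 \<le> D" using D[of 0] by linarith
  obtain N where N: "\<And>n. N \<le> n \<Longrightarrow> \<bar>d n\<bar> \<le> B"
    using assms(4) unfolding eventually_sequentially by blast
  obtain Q where "Qs \<longlonglongrightarrow> Q"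
    unfolding Qs_def using nonneg_partial_sums_tendsto q_nonneg q_partial_sums_le by blast
  then have "Cauchy Qs" by (rule LIMSEQ_imp_Cauchy)
  moreover have "0 < \<epsilon> / (2 * (D + 1))" using \<open>0 < \<epsilon>\<close> \<open>0 \<le> D\<close> by simp
  ultimately obtain M where M: "\<And>h. M \<le> h \<Longrightarrow> \<bar>Qs h - Qs M\<bar> < \<epsilon> / (2 * (D + 1))"
    using CauchyD[of Qs] by (metis order_refl real_norm_def)
  have "eventually (\<lambda>n. \<bar>e n\<bar> < \<epsilon> / 2) sequentially"
    using tendstoD[OF e_tendsto_0, of "\<epsilon> / 2"] \<open>0 < \<epsilon>\<close> by (simp add: dist_real_def)
  moreover have "eventually (\<lambda>n. 2 * M + N + 1 \<le> n) sequentially"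
    by (rule eventually_ge_at_top)
  \<comment> \<open>The terms with l \<le> M only see indices n - 2l \<ge> N; those with l > M have total weight
    below \<epsilon> / (2 (D + 1)).\<close>
  ultimately show ?thesis
  proof eventually_elim
    case (elim n)
    let ?h = "n div 2"
    have "M \<le> ?h" using elim by linarith
    have "(\<Sum>l=1..M. q l * \<bar>d (n - 2*l)\<bar>) \<le> \<rho> * B"
      using N elim \<open>0 \<le> B\<close> by (intro renewal_weighted_sum_le) auto
    moreover have "(\<Sum>l=Suc M..?h. q l * \<bar>d (n - 2*l)\<bar>) \<le> \<epsilon> / 2"
    proof -
      have "(\<Sum>l=Suc M..?h. q l * \<bar>d (n - 2*l)\<bar>) \<le> (\<Sum>l=Suc M..?h. q l) * D"
        unfolding sum_distrib_right by (rule sum_mono) (simp add: D mult_left_mono q_nonneg)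
      also have "(\<Sum>l=Suc M..?h. q l) = Qs ?h - Qs M"
        unfolding Qs_def using sum.ub_add_nat[of 1 M q "?h - M"] \<open>M \<le> ?h\<close> by simp
      also have "(Qs ?h - Qs M) * D \<le> \<epsilon> / (2 * (D + 1)) * D"
        using M[OF \<open>M \<le> ?h\<close>] \<open>0 \<le> D\<close> by (intro mult_right_mono) auto
      also have "\<dots> \<le> \<epsilon> / 2"
        using \<open>0 < \<epsilon>\<close> \<open>0 \<le> D\<close> by (simp add: field_simps)
      finally show ?thesis .
    qed
    moreover have "(\<Sum>l=1..?h. q l * \<bar>d (n - 2*l)\<bar>) =
        (\<Sum>l=1..M. q l * \<bar>d (n - 2*l)\<bar>) + (\<Sum>l=Suc M..?h. q l * \<bar>d (n - 2*l)\<bar>)"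
      using sum.ub_add_nat[of 1 M _ "?h - M"] \<open>M \<le> ?h\<close> by simp
    ultimately show ?case using d_renewal_le[of n] elim by linarith
  qed
qed

lemma renewal_tendsto_zero: "d \<longlonglongrightarrow> 0"
proof -
  obtain D where "\<And>n. \<bar>d n\<bar> \<le> D" by (metis renewal_bounded)
  moreover have "0 \<le> \<rho>" using q_partial_sums_le[of 0] by simp
  ultimately show ?thesis
    using \<rho>_less_1 renewal_contracting by (intro tendsto_zero_if_contracting) blast+
qed

end

lemma renewal_equation_convergent:
  fixes a q x :: "nat \<Rightarrow> real"
  assumes q_nonneg: "\<And>l. 0 \<le> q l" and q_partial_sums_le: "\<And>m. (\<Sum>l=1..m. q l) \<le> \<rho>"
    and "\<rho> < 1" and "a \<longlonglongrightarrow> A"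
    and x_eq: "\<And>n. 1 \<le> n \<Longrightarrow> x n = a n + (\<Sum>l=1..n div 2. q l * x (n - 2*l))"
  shows "convergent x"
proof -
  obtain Q where Q: "(\<lambda>m. \<Sum>l=1..m. q l) \<longlonglongrightarrow> Q" "Q \<le> \<rho>"
    using nonneg_partial_sums_tendsto q_nonneg q_partial_sums_le by blast
  define L where "L = A / (1 - Q)" \<comment> \<open>the fixed point of L = A + Q L\<close>
  define e where "e n = a n - (1 - (\<Sum>l=1..n div 2. q l)) * L" for n
  have "e \<longlonglongrightarrow> A - (1 - Q) * L"
    unfolding e_def using LIMSEQ_div_nat[OF Q(1)] \<open>a \<longlonglongrightarrow> A\<close> by (auto intro!: tendsto_intros)
  then have "e \<longlonglongrightarrow> 0" using Q(2) \<open>\<rho> < 1\<close> by (simp add: L_def)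
  have d_eq: "x n - L = e n + (\<Sum>l=1..n div 2. q l * (x (n - 2*l) - L))" if "1 \<le> n" for n
    using x_eq[OF that] by (simp add: e_def algebra_simps sum_subtractf sum_distrib_left)
  have "\<bar>x n - L\<bar> \<le> \<bar>e n\<bar> + (\<Sum>l=1..n div 2. q l * \<bar>x (n - 2*l) - L\<bar>)" if "1 \<le> n" for n
  proof -
    have "\<bar>\<Sum>l=1..n div 2. q l * (x (n - 2*l) - L)\<bar> \<le> (\<Sum>l=1..n div 2. q l * \<bar>x (n - 2*l) - L\<bar>)"
      using sum_abs[of "\<lambda>l. q l * (x (n - 2*l) - L)" "{1..n div 2}"] by (simp add: abs_mult q_nonneg)
    then show ?thesis unfolding d_eq[OF that] by linarith
  qed
  then have "(\<lambda>n. x n - L) \<longlonglongrightarrow> 0"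
    by (rule renewal_tendsto_zero[OF q_nonneg q_partial_sums_le \<open>\<rho> < 1\<close> \<open>e \<longlonglongrightarrow> 0\<close>])
  then show ?thesis unfolding convergent_def LIM_zero_iff by blast
qed

section \<open>Expected width\<close>

lemma card_unbordered_words_le: "card (unbordered_words k l) \<le> k ^ l"
proof -
  have "unbordered_words k l \<subseteq> words k l" unfolding unbordered_words_def by blast
  from card_mono[OF finite_words this] show ?thesis by (simp add: card_words)
qed

lemma card_unbordered_words_less:
  assumes "1 \<le> k" "2 \<le> l"
  shows "card (unbordered_words k l) < k ^ l"
proof -
  obtain m where "l = Suc m" using assms(2) by (cases l) auto
  then have "replicate l (0::nat) = [0] @ replicate m 0" "replicate l (0::nat) = replicate m 0 @ [0]"
    by (simp_all add: replicate_append_same)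
  then have "prefix [0] (replicate l (0::nat))" "suffix [0] (replicate l (0::nat))"
    by (metis prefixI, metis suffixI)
  moreover have "[0] \<noteq> replicate l (0::nat)" using \<open>l = Suc m\<close> assms(2) by auto
  ultimately have "\<not> unbordered (replicate l (0::nat))" unfolding unbordered_def by blast
  moreover have "replicate l 0 \<in> words k l" using assms(1) unfolding words_def by auto
  ultimately have "unbordered_words k l \<subset> words k l" unfolding unbordered_words_def by blast
  from psubset_card_mono[OF finite_words this] show ?thesis by (simp add: card_words)
qed

text \<open>unbordered_weight k l is the probability that a random word of length at least 2l
  begins and ends with the same unbordered word of length l.\<close>

definition unbordered_weight :: "nat \<Rightarrow> nat \<Rightarrow> real" where
  "unbordered_weight k l = card (unbordered_words k l) / real k ^ (2 * l)"

lemma unbordered_weight_le: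
  assumes "1 \<le> k"
  shows "unbordered_weight k l \<le> (1 / real k) ^ l"
proof -
  have "unbordered_weight k l \<le> real k ^ l / real k ^ (2 * l)"
    unfolding unbordered_weight_def using card_unbordered_words_le[of k l]
    by (intro divide_right_mono) (simp_all flip: of_nat_le_iff)
  also have "\<dots> = (1 / real k) ^ l"
    using assms by (simp add: power_mult power2_eq_square power_mult_distrib field_simps)
  finally show ?thesis .
qed

lemma unbordered_weight_2_le:
  assumes "1 \<le> k"
  shows "unbordered_weight k 2 \<le> (1 / real k) ^ 2 - (1 / real k) ^ 4"
proof -
  have "card (unbordered_words k 2) \<le> k ^ 2 - 1"
    using card_unbordered_words_less[OF assms, of 2] by simp
  then have "real (card (unbordered_words k 2)) \<le> real (k ^ 2 - 1)"
    by (rule of_nat_mono)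
  also have "\<dots> = real k ^ 2 - 1"
    using assms by (simp add: of_nat_diff)
  finally have "real (card (unbordered_words k 2)) \<le> real k ^ 2 - 1" .
  then have "unbordered_weight k 2 \<le> (real k ^ 2 - 1) / real k ^ 4"
    unfolding unbordered_weight_def by (simp add: divide_right_mono)
  also have "\<dots> = (1 / real k) ^ 2 - (1 / real k) ^ 4"
    using assms by (simp add: field_simps)
  finally show ?thesis .
qed

lemma sum_power_le_1:
  fixes x :: real
  assumes "0 \<le> x" "x \<le> 1 / 2"
  shows "(\<Sum>l=1..m. x ^ l) \<le> 1"
proof -
  have "(\<Sum>l=1..m. x ^ l) \<le> (\<Sum>l=1..m. (1 / 2 :: real) ^ l)"
    using assms by (intro sum_mono power_mono) auto
  also have "\<dots> = 1 - (1 / 2) ^ m"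
    by (induction m) (simp_all add: sum.cl_ivl_Suc)
  also have "\<dots> \<le> 1" by simp
  finally show ?thesis .
qed

text \<open>The bound \<open>(1/k)^l\<close> alone only gives partial sums below \<open>1\<close> (with equality in the limit
  for k = 2); the bordered word 00 supplies the uniform gap.\<close>

lemma unbordered_weight_partial_sums_le:
  assumes "2 \<le> k"
  shows "(\<Sum>l=1..m. unbordered_weight k l) \<le> 1 - (1 / real k) ^ 4"
proof -
  define x where "x = 1 / real k"
  have x: "0 \<le> x" "x \<le> 1 / 2" unfolding x_def using assms by (auto simp: field_simps)
  have le: "unbordered_weight k l \<le> x ^ l" for l
    unfolding x_def using assms by (intro unbordered_weight_le) simp
  show ?thesis
  proof (cases "2 \<le> m")
    case True
    have "(\<Sum>l=1..m. unbordered_weight k l) \<le> (\<Sum>l=1..m. x ^ l - (if l = 2 then x ^ 4 else 0))"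
      using le unbordered_weight_2_le[of k] assms by (intro sum_mono) (auto simp: x_def)
    also have "\<dots> = (\<Sum>l=1..m. x ^ l) - x ^ 4"
      using True by (simp add: sum_subtractf)
    also have "\<dots> \<le> 1 - x ^ 4" using sum_power_le_1[OF x] by simp
    finally show ?thesis unfolding x_def .
  next
    case False
    then have "m = 0 \<or> m = 1" by auto
    then have "(\<Sum>l=1..m. unbordered_weight k l) \<le> x"
      using le[of 1] x by auto
    also have "\<dots> \<le> 1 - x ^ 4"
    proof -
      have "x ^ 4 \<le> (1 / 2) ^ 4" using x by (intro power_mono)
      also have "\<dots> = 1 / 16" by (simp add: power_divide)
      finally show ?thesis using x by linarith
    qed
    finally show ?thesis unfolding x_def .
  qed
qed

lemma E_renewal_equation:
  assumes "1 \<le> k" "1 \<le> n"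
  shows "E n k = (1 + (\<Sum>l=1..n div 2. unbordered_weight k l))
    + (\<Sum>l=1..n div 2. unbordered_weight k l * E (n - 2*l) k)"
proof -
  have summand: "real (card (unbordered_words k l)) * (real k ^ (n - 2*l) + real (width_sum k (n - 2*l)))
      / real k ^ n = unbordered_weight k l * (1 + E (n - 2*l) k)" if "l \<in> {1..n div 2}" for l
  proof -
    have "2 * l \<le> n" using that by auto
    then have split: "real k ^ n = real k ^ (2*l) * real k ^ (n - 2*l)"
      by (simp flip: power_add)
    have frac: "c * (B + W) / (A * B) = c / A * (1 + W / B)" if "A \<noteq> 0" "B \<noteq> 0" for c W A B :: real
      using that by (simp add: field_simps)
    show ?thesis
      unfolding unbordered_weight_def E_eq_width_sum split by (rule frac) (use assms(1) in simp_all)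
  qed
  have "E n k = (real k ^ n + (\<Sum>l=1..n div 2.
      real (card (unbordered_words k l)) * (real k ^ (n - 2*l) + real (width_sum k (n - 2*l))))) / real k ^ n"
    unfolding E_eq_width_sum width_sum_rec[OF assms(2)] by simp
  also have "\<dots> = 1 + (\<Sum>l=1..n div 2. real (card (unbordered_words k l))
      * (real k ^ (n - 2*l) + real (width_sum k (n - 2*l))) / real k ^ n)"
    using assms(1) by (simp add: add_divide_distrib sum_divide_distrib)
  also have "\<dots> = 1 + (\<Sum>l=1..n div 2. unbordered_weight k l * (1 + E (n - 2*l) k))"
    using summand by (intro arg_cong[where f = "(+) 1"] sum.cong) auto
  finally show ?thesis by (simp add: distrib_left sum.distrib)
qed

theorem theorem4:
  fixes k :: nat
  assumes "k \<ge> 2"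
  shows "convergent (\<lambda>n. E n k)"
proof -
  have weight_nonneg: "\<And>l. 0 \<le> unbordered_weight k l" by (simp add: unbordered_weight_def)
  note weight_partial_sums_le = unbordered_weight_partial_sums_le[OF assms]
  obtain Q where "(\<lambda>m. \<Sum>l=1..m. unbordered_weight k l) \<longlonglongrightarrow> Q"
    using nonneg_partial_sums_tendsto weight_nonneg weight_partial_sums_le by blast
  then have a_tendsto: "(\<lambda>n. 1 + (\<Sum>l=1..n div 2. unbordered_weight k l)) \<longlonglongrightarrow> 1 + Q"
    by (intro tendsto_add tendsto_const LIMSEQ_div_nat) auto
  have "1 - (1 / real k) ^ 4 < 1" using assms by simp
  then show ?thesis
  proof (rule renewal_equation_convergent[OF weight_nonneg weight_partial_sums_le _ a_tendsto])
    show "E n k = (1 + (\<Sum>l=1..n div 2. unbordered_weight k l))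
        + (\<Sum>l=1..n div 2. unbordered_weight k l * E (n - 2*l) k)" if "1 \<le> n" for n
      using assms that by (intro E_renewal_equation) auto
  qed
qed

end
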